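(* For $z\in\mathbb{C}$ with $\Re z>-1$, the functions $$u_z(y):=\frac{e^{-zy}-1-z(e^{-y}-1)}{e^{y}-1},\qquad v_z(y):=ze^{-y}-u_z(y)=\frac{1-e^{-zy}}{e^{y}-1}$$ (extended by continuity at $y=0$) are bounded and continuous on $[0,\infty)$. Furthermore, there exist constants $C_{\Re z},C_{1,\Re z},C_{2,\Re z},\epsilon_{1,\Re z},\epsilon_{2,\Re z}>0$, depending only on $\Re z$, such that for all $y\ge0$ and all $x\ge C_{\Re z}$, $$|v_z(y)|\le C_{1,\Re z}\,|z|\,e^{-\epsilon_{1,\Re z}y}\qquad\text{and}\qquad |v_z(x)|\le C_{2,\Re z}\,e^{-\epsilon_{2,\Re z}x}.$$ *)

theory Defs
  imports "HOL-Analysis.Analysis"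
begin

definition u_fun :: "complex \<Rightarrow> real \<Rightarrow> complex" where
  "u_fun z y = (if y = 0 then 0
     else (exp (- (z * of_real y)) - 1 - z * (exp (- of_real y) - 1)) / (exp (of_real y) - 1))"

definition v_fun :: "complex \<Rightarrow> real \<Rightarrow> complex" where
  "v_fun z y = z * exp (- of_real y) - u_fun z y"

end

theory Submission
  imports Defs
begin

text \<open>Fix 0 < c < 1 with -Re z \<le> c.
  Comparing derivatives gives |1 - e^{-zy}| \<le> |z| (e^{cy} - 1)/c, and
  e^{cy} - 1 = e^{-(1-c)y}(e^y - 1) - (1 - e^{-(1-c)y}) \<le> e^{-(1-c)y}(e^y - 1), so
  |v_z(y)| \<le> (|z|/c) e^{-(1-c)y}; this also bounds v_z and u_z = z e^{-y} - v_z. For large y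
  the cruder estimate |1 - e^{-zy}| \<le> 2e^{cy} gives a bound independent of z. Near 0, numerator
  and denominator of v_z are difference quotients of exponentials, so v_z(y) \<rightarrow> z = v_z(0).\<close>

lemma v_fun_eq:
  assumes "y \<noteq> 0"
  shows "v_fun z y = (1 - exp (- (z * of_real y))) / (exp (of_real y) - 1)"
proof -
  have "exp (complex_of_real y) \<noteq> 1"
    using assms by (simp add: exp_of_real del: of_real_exp)
  then show ?thesis
    using assms by (simp add: v_fun_def u_fun_def exp_minus field_simps)
qed

lemma norm_one_minus_exp_le:
  fixes z :: complex
  assumes "0 < c" "- Re z \<le> c" "0 \<le> y"
  shows "norm (1 - exp (- (z * of_real y))) \<le> norm z * (exp (c * y) - 1) / c"
proof (cases "y = 0")
  case False
  have "norm ((\<lambda>t. exp (- (z * of_real t))) y - (\<lambda>t. exp (- (z * of_real t))) 0)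
        \<le> (\<lambda>t. norm z * exp (c * t) / c) y - (\<lambda>t. norm z * exp (c * t) / c) 0"
  proof (rule differentiable_bound_general)
    fix t assume t: "0 < t" "t < y"
    show "((\<lambda>t. exp (- (z * of_real t))) has_vector_derivative - z * exp (- (z * of_real t))) (at t)"
      by (rule has_vector_derivative_real_field) (auto intro!: derivative_eq_intros)
    show "((\<lambda>t. norm z * exp (c * t) / c) has_vector_derivative norm z * exp (c * t)) (at t)"
      unfolding has_real_derivative_iff_has_vector_derivative[symmetric]
      using assms by (auto intro!: derivative_eq_intros)
    have "- Re z * t \<le> c * t" using assms t by (intro mult_right_mono) auto
    then show "norm (- z * exp (- (z * of_real t))) \<le> norm z * exp (c * t)"
      by (simp add: norm_mult mult_left_mono)
  qed (use False assms in \<open>auto intro!: continuous_intros\<close>)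
  then show ?thesis by (simp add: norm_minus_commute diff_divide_distrib right_diff_distrib)
qed simp

lemma exp_mult_minus_one_le:
  fixes c y :: real
  assumes "c \<le> 1" "0 \<le> y"
  shows "exp (c * y) - 1 \<le> exp (- (1 - c) * y) * (exp y - 1)"
proof -
  have "exp (- (1 - c) * y) \<le> 1" using assms by (simp add: mult_nonpos_nonneg)
  moreover have "exp (- (1 - c) * y) * exp y = exp (c * y)"
    by (simp flip: exp_add add: algebra_simps)
  ultimately show ?thesis by (simp add: right_diff_distrib)
qed

lemma norm_v_fun_eq:
  assumes "0 < y"
  shows "norm (v_fun z y) = norm (1 - exp (- (z * of_real y))) / (exp y - 1)"
proof -
  have "norm (exp (complex_of_real y) - 1) = norm (complex_of_real (exp y - 1))"
    by (simp add: exp_of_real)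
  also have "\<dots> = exp y - 1"
    using assms by (simp only: norm_of_real) simp
  finally show ?thesis
    using assms by (simp add: v_fun_eq norm_divide)
qed

lemma norm_v_fun_le:
  assumes "0 < c" "c \<le> 1" "- Re z \<le> c" "0 \<le> y"
  shows "norm (v_fun z y) \<le> norm z / c * exp (- (1 - c) * y)"
proof (cases "y = 0")
  case True
  have "norm z \<le> norm z / c"
    using assms by (simp add: le_divide_eq mult_left_le)
  with True show ?thesis
    by (simp add: v_fun_def u_fun_def)
next
  case False
  then have "exp y - 1 > 0" using assms by simp
  have "norm (v_fun z y) = norm (1 - exp (- (z * of_real y))) / (exp y - 1)"
    using False assms(4) by (simp add: norm_v_fun_eq)
  also have "\<dots> \<le> norm z * (exp (c * y) - 1) / c / (exp y - 1)"
    using \<open>exp y - 1 > 0\<close> by (intro divide_right_mono norm_one_minus_exp_le assms) auto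
  also have "\<dots> \<le> norm z / c * exp (- (1 - c) * y)"
    using exp_mult_minus_one_le[OF assms(2,4)] \<open>exp y - 1 > 0\<close> assms(1)
    by (simp add: divide_le_eq mult_left_mono)
  finally show ?thesis .
qed

lemma norm_v_fun_le_uniform:
  assumes "0 \<le> c" "- Re z \<le> c" "1 \<le> x"
  shows "norm (v_fun z x) \<le> 4 * exp (- (1 - c) * x)"
proof -
  have "0 < x" using assms(3) by simp
  have "2 \<le> exp x"
    using exp_ge_add_one_self[of 1] exp_le_cancel_iff[of 1 x] assms(3) by linarith
  have "norm (1 - exp (- (z * of_real x))) \<le> 1 + exp (- Re z * x)"
    using norm_triangle_ineq4[of 1 "exp (- (z * of_real x))"] by simp
  also have "\<dots> \<le> 2 * exp (c * x)"
  proof -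
    have "- Re z * x \<le> c * x" using assms by (intro mult_right_mono) auto
    then have "exp (- Re z * x) \<le> exp (c * x)" by simp
    moreover have "1 \<le> exp (c * x)" using assms by simp
    ultimately show ?thesis by linarith
  qed
  finally have "norm (1 - exp (- (z * of_real x))) \<le> 2 * exp (c * x)" .
  then have "norm (v_fun z x) \<le> 2 * exp (c * x) / (exp x / 2)"
    unfolding norm_v_fun_eq[OF \<open>0 < x\<close>] using \<open>2 \<le> exp x\<close> by (intro frac_le) auto
  also have "\<dots> = 4 * exp (- (1 - c) * x)"
    by (simp add: algebra_simps exp_diff)
  finally show ?thesis .
qed

lemma tendsto_exp_mult_difference_quotient:
  fixes w :: complex
  shows "((\<lambda>y::real. (exp (w * of_real y) - 1) / of_real y) \<longlongrightarrow> w) (at 0)"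
proof -
  have "((\<lambda>h. exp (w * h)) has_field_derivative w) (at 0)"
    by (auto intro!: derivative_eq_intros)
  then have "((\<lambda>h. (exp (w * h) - 1) / h) \<longlongrightarrow> w) (at 0)"
    by (simp add: has_field_derivative_iff)
  moreover have "filterlim complex_of_real (at 0) (at 0)"
    unfolding filterlim_at by (auto simp: eventually_at_filter intro!: tendsto_eq_intros)
  ultimately show ?thesis by (rule filterlim_compose)
qed

lemma tendsto_v_fun_0: "(v_fun z \<longlongrightarrow> z) (at 0)"
proof -
  have "((\<lambda>t. - ((exp (- z * of_real t) - 1) / of_real t) / ((exp (1 * of_real t) - 1) / of_real t))
         \<longlongrightarrow> - (- z) / 1) (at 0)"
    by (intro tendsto_minus tendsto_divide tendsto_exp_mult_difference_quotient) simp
  moreover have "- ((exp (- z * of_real t) - 1) / of_real t) / ((exp (1 * of_real t) - 1) / of_real t)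
                 = v_fun z t" if "t \<noteq> 0" for t
  proof -
    have "complex_of_real t \<noteq> 0" "exp (complex_of_real t) \<noteq> 1"
      using that by (simp_all add: exp_of_real del: of_real_exp)
    then show ?thesis
      using that by (simp add: v_fun_eq field_simps)
  qed
  ultimately show ?thesis
    unfolding minus_minus div_by_1 by (subst (asm) LIM_equal) auto
qed

lemma isCont_v_fun: "isCont (v_fun z) y"
proof (cases "y = 0")
  case True
  then show ?thesis
    using tendsto_v_fun_0 by (simp add: isCont_def v_fun_def u_fun_def)
next
  case False
  have "isCont (\<lambda>t. (1 - exp (- (z * of_real t))) / (exp (of_real t) - 1)) y"
    using False by (auto intro!: continuous_intros simp: exp_of_real simp del: of_real_exp)
  moreover have "\<forall>\<^sub>F t in nhds y. (1 - exp (- (z * of_real t))) / (exp (of_real t) - 1) = v_fun z t"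
    using t1_space_nhds[OF False] by eventually_elim (simp add: v_fun_eq)
  ultimately show ?thesis by (rule isCont_cong[THEN iffD1, rotated])
qed

lemma u_fun_eq: "u_fun z y = z * exp (- of_real y) - v_fun z y"
  by (simp add: v_fun_def)

lemma isCont_u_fun: "isCont (u_fun z) y"
  unfolding u_fun_eq[abs_def] by (intro continuous_intros isCont_v_fun)

lemma bounded_v_fun:
  assumes "-1 < Re z"
  shows "bounded (v_fun z ` {0..})"
proof (rule boundedI)
  define c where "c = max (1/2) (- Re z)"
  have c: "0 < c" "c \<le> 1" "- Re z \<le> c"
    using assms by (auto simp: c_def)
  fix v assume "v \<in> v_fun z ` {0..}"
  then obtain y where "0 \<le> y" "v = v_fun z y" by auto
  then have "norm v \<le> norm z / c * exp (- (1 - c) * y)"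
    using c by (simp only: norm_v_fun_le)
  also have "\<dots> \<le> norm z / c"
    using c \<open>0 \<le> y\<close> by (intro mult_left_le) (simp_all add: mult_nonpos_nonneg)
  finally show "norm v \<le> norm z / c" .
qed

lemma bounded_u_fun:
  assumes "-1 < Re z"
  shows "bounded (u_fun z ` {0..})"
proof -
  have "bounded ((\<lambda>y. z * exp (- of_real y)) ` {0..})"
    by (rule boundedI[where B = "norm z"]) (auto simp: norm_mult mult_left_le)
  then show ?thesis
    unfolding u_fun_eq[abs_def] using bounded_v_fun[OF assms] by (rule bounded_minus_comp)
qed

theorem lemma5p2:
  shows "(\<forall>z::complex. Re z > -1 \<longrightarrow>
            (\<forall>y::real. y > 0 \<longrightarrow> v_fun z y = (1 - exp (- (z * of_real y))) / (exp (of_real y) - 1))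
          \<and> bounded (u_fun z ` {0..}) \<and> continuous_on {0..} (u_fun z)
          \<and> bounded (v_fun z ` {0..}) \<and> continuous_on {0..} (v_fun z))
       \<and> (\<forall>a::real. a > -1 \<longrightarrow>
            (\<exists>C C1 C2 e1 e2 :: real. C > 0 \<and> C1 > 0 \<and> C2 > 0 \<and> e1 > 0 \<and> e2 > 0 \<and>
              (\<forall>z::complex. Re z = a \<longrightarrow>
                 (\<forall>y::real. y \<ge> 0 \<longrightarrow> norm (v_fun z y) \<le> C1 * norm z * exp (- e1 * y))
               \<and> (\<forall>x::real. x \<ge> C \<longrightarrow> norm (v_fun z x) \<le> C2 * exp (- e2 * x)))))"
proof (intro conjI allI impI)
  fix a :: real
  assume "a > -1"
  define c where "c = max (1/2) (- a)"
  have c: "0 < c" "c < 1" "- a \<le> c"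
    using \<open>a > -1\<close> by (auto simp: c_def)
  have "norm (v_fun z y) \<le> 1 / c * norm z * exp (- (1 - c) * y)" if "Re z = a" "y \<ge> 0" for z y
    using norm_v_fun_le[of c z y] c that by simp
  moreover have "norm (v_fun z x) \<le> 4 * exp (- (1 - c) * x)" if "Re z = a" "x \<ge> 1" for z x
    using norm_v_fun_le_uniform[of c z x] c that by simp
  ultimately show "\<exists>C C1 C2 e1 e2 :: real. C > 0 \<and> C1 > 0 \<and> C2 > 0 \<and> e1 > 0 \<and> e2 > 0 \<and>
      (\<forall>z::complex. Re z = a \<longrightarrow>
         (\<forall>y::real. y \<ge> 0 \<longrightarrow> norm (v_fun z y) \<le> C1 * norm z * exp (- e1 * y))
       \<and> (\<forall>x::real. x \<ge> C \<longrightarrow> norm (v_fun z x) \<le> C2 * exp (- e2 * x)))"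
    using c by (intro exI[of _ 1] exI[of _ "1 / c"] exI[of _ 4] exI[of _ "1 - c"]) auto
qed (simp_all add: v_fun_eq bounded_u_fun bounded_v_fun
       continuous_at_imp_continuous_on isCont_u_fun isCont_v_fun)

end
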